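(* Let $G$ be a Ricci-flat graph that contains no edge $(u,v)$ with $d(u)=d(v)=2$. Then every edge of $G$ is contained in a cycle of length $3$, or a cycle of length $4$, or a cycle of length $5$.
   Context: All graphs are simple (no loops or multiple edges), undirected, connected and locally finite; $d(x)$ is the degree of $x$, $d(x,y)$ the graph distance, and $\Gamma(x)$ the set of neighbours of $x$. For a vertex $x$ and $\alpha\in[0,1]$ let $\mu_x^\alpha$ be the probability measure with $\mu_x^\alpha(x)=\alpha$, $\mu_x^\alpha(z)=\frac{1-\alpha}{d(x)}$ for $z\sim x$, and $0$ otherwise. The transportation distance is $W(\mu_1,\mu_2)=\inf_A\sum_{u,v}A(u,v)d(u,v)$ over all couplings $A$ of $\mu_1,\mu_2$ (i.e. $A:V\times V\to[0,1]$ with finite support, $\sum_v A(u,v)=\mu_1(u)$, $\sum_u A(u,v)=\mu_2(v)$). Set $k_\alpha(x,y)=1-W(\mu_x^\alpha,\mu_y^\alpha)/d(x,y)$ and define the (Lin–Lu–Yau) Ricci curvature $k(x,y)=\lim_{\alpha\to1}k_\alpha(x,y)/(1-\alpha)$. A graph is Ricci-flat if $k(x,y)=0$ for every edge $(x,y)$. An edge is contained in a cycle of length $\ell$ if some cycle subgraph of $G$ with $\ell$ vertices uses that edge. *)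

theory Defs
  imports "HOL-Analysis.Analysis"
begin

text \<open>A graph on the vertex type 'a (all elements of 'a are vertices), given by an
  adjacency relation E: simple (symmetric, irreflexive), locally finite, connected.\<close>
definition graph :: "('a \<Rightarrow> 'a \<Rightarrow> bool) \<Rightarrow> bool" where
  "graph E \<longleftrightarrow> (\<forall>x y. E x y \<longrightarrow> E y x) \<and> (\<forall>x. \<not> E x x)
     \<and> (\<forall>x. finite {y. E x y}) \<and> (\<forall>x y. E\<^sup>*\<^sup>* x y)"

definition deg :: "('a \<Rightarrow> 'a \<Rightarrow> bool) \<Rightarrow> 'a \<Rightarrow> nat" where
  "deg E x = card {y. E x y}"

definition gdist :: "('a \<Rightarrow> 'a \<Rightarrow> bool) \<Rightarrow> 'a \<Rightarrow> 'a \<Rightarrow> nat" where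
  "gdist E x y = (LEAST n. (E ^^ n) x y)"

definition mu :: "('a \<Rightarrow> 'a \<Rightarrow> bool) \<Rightarrow> real \<Rightarrow> 'a \<Rightarrow> 'a \<Rightarrow> real" where
  "mu E \<alpha> x z = (if z = x then \<alpha> else if E x z then (1 - \<alpha>) / real (deg E x) else 0)"

definition supp2 :: "('a \<Rightarrow> 'a \<Rightarrow> real) \<Rightarrow> ('a \<times> 'a) set" where
  "supp2 A = {p. A (fst p) (snd p) \<noteq> 0}"

definition coupling :: "('a \<Rightarrow> real) \<Rightarrow> ('a \<Rightarrow> real) \<Rightarrow> ('a \<Rightarrow> 'a \<Rightarrow> real) \<Rightarrow> bool" where
  "coupling m1 m2 A \<longleftrightarrow> (\<forall>u v. 0 \<le> A u v \<and> A u v \<le> 1) \<and> finite (supp2 A)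
     \<and> (\<forall>u. (\<Sum>v\<in>{v. A u v \<noteq> 0}. A u v) = m1 u)
     \<and> (\<forall>v. (\<Sum>u\<in>{u. A u v \<noteq> 0}. A u v) = m2 v)"

definition transport_cost :: "('a \<Rightarrow> 'a \<Rightarrow> bool) \<Rightarrow> ('a \<Rightarrow> 'a \<Rightarrow> real) \<Rightarrow> real" where
  "transport_cost E A = (\<Sum>p\<in>supp2 A. A (fst p) (snd p) * real (gdist E (fst p) (snd p)))"

definition transport_dist :: "('a \<Rightarrow> 'a \<Rightarrow> bool) \<Rightarrow> ('a \<Rightarrow> real) \<Rightarrow> ('a \<Rightarrow> real) \<Rightarrow> real" where
  "transport_dist E m1 m2 = Inf {transport_cost E A | A. coupling m1 m2 A}"

definition kappa_alpha :: "('a \<Rightarrow> 'a \<Rightarrow> bool) \<Rightarrow> real \<Rightarrow> 'a \<Rightarrow> 'a \<Rightarrow> real" where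
  "kappa_alpha E \<alpha> x y = 1 - transport_dist E (mu E \<alpha> x) (mu E \<alpha> y) / real (gdist E x y)"

definition ricci :: "('a \<Rightarrow> 'a \<Rightarrow> bool) \<Rightarrow> 'a \<Rightarrow> 'a \<Rightarrow> real" where
  "ricci E x y = Lim (at_left 1) (\<lambda>\<alpha>. kappa_alpha E \<alpha> x y / (1 - \<alpha>))"

definition ricci_flat :: "('a \<Rightarrow> 'a \<Rightarrow> bool) \<Rightarrow> bool" where
  "ricci_flat E \<longleftrightarrow> (\<forall>x y. E x y \<longrightarrow> ricci E x y = 0)"

definition edge_in_cycle :: "('a \<Rightarrow> 'a \<Rightarrow> bool) \<Rightarrow> 'a \<Rightarrow> 'a \<Rightarrow> nat \<Rightarrow> bool" where
  "edge_in_cycle E u v l \<longleftrightarrow> E u v \<and> 3 \<le> l \<and> (\<exists>xs. length xs = l \<and> distinct xs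
     \<and> hd xs = u \<and> last xs = v \<and> (\<forall>i. Suc i < l \<longrightarrow> E (xs ! i) (xs ! Suc i)))"

end

theory Submission
  imports Defs
begin

text \<open>If the edge \<open>xy\<close> lies on no cycle of length 3, 4 or 5, then a neighbour \<open>a \<noteq> y\<close> of
  \<open>x\<close> and a neighbour \<open>b \<noteq> x\<close> of \<open>y\<close> are at distance 3, as in a tree. For \<open>\<alpha> \<ge> 1/2\<close>
  the transport distance \<open>W(\<mu>\<^sub>x, \<mu>\<^sub>y)\<close> can then be computed exactly: the potential taking
  the values 1 at \<open>x\<close>, 0 at \<open>y\<close>, 2 at the other neighbours of \<open>x\<close> and -1 at the other
  neighbours of \<open>y\<close> is 1-Lipschitz on the supports, and the coupling sending the other
  neighbours of \<open>x\<close> to \<open>y\<close> and feeding the other neighbours of \<open>y\<close> from \<open>x\<close> is tight for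
  it. This gives \<open>W = 1 + (1 - \<alpha>)(2 - 2/d(x) - 2/d(y))\<close>, hence
  \<open>\<kappa>(x, y) = 2/d(x) + 2/d(y) - 2\<close>, which vanishes only if \<open>d(x) = d(y) = 2\<close>.\<close>

lemma successively_iff_nth:
  "successively P xs \<longleftrightarrow> (\<forall>i. Suc i < length xs \<longrightarrow> P (xs ! i) (xs ! Suc i))"
  by (induction P xs rule: successively.induct) (auto simp: nth_Cons split: nat.splits)

lemma edge_in_cycleI:
  assumes "E u v" "distinct xs" "3 \<le> length xs" "hd xs = u" "last xs = v" "successively E xs"
  shows "edge_in_cycle E u v (length xs)"
  using assms by (auto simp: edge_in_cycle_def successively_iff_nth)

lemma graph_sym: "graph E \<Longrightarrow> E u v \<Longrightarrow> E v u"
  by (simp add: graph_def)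

lemma graph_irrefl: "graph E \<Longrightarrow> \<not> E u u"
  by (simp add: graph_def)

lemma graph_finite_neighbours: "graph E \<Longrightarrow> finite {v. E u v}"
  by (simp add: graph_def)

lemma graph_connected: "graph E \<Longrightarrow> E\<^sup>*\<^sup>* u v"
  by (simp add: graph_def)

lemma deg_pos: "graph E \<Longrightarrow> E u v \<Longrightarrow> 0 < deg E u"
  using graph_finite_neighbours[of E u] by (auto simp: deg_def card_gt_0_iff)

lemma gdist_le: "(E ^^ n) u v \<Longrightarrow> gdist E u v \<le> n"
  unfolding gdist_def by (rule Least_le)

lemma le_gdistI:
  assumes "E\<^sup>*\<^sup>* u v" and "\<And>n. n < k \<Longrightarrow> \<not> (E ^^ n) u v"
  shows "k \<le> gdist E u v"
proof -
  obtain n where "(E ^^ n) u v" using assms(1) rtranclp_power by metis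
  then have "(E ^^ gdist E u v) u v" unfolding gdist_def by (rule LeastI)
  then show ?thesis using assms(2) not_less by blast
qed

lemma gdist_self: "gdist E u u = 0"
  by (simp add: gdist_def)

lemma gdist_le_2: "E u w \<Longrightarrow> E w v \<Longrightarrow> gdist E u v \<le> 2"
  by (rule gdist_le) (auto simp: numeral_2_eq_2 relcompp_apply)

lemma gdist_ge_1: "graph E \<Longrightarrow> u \<noteq> v \<Longrightarrow> 1 \<le> gdist E u v"
  by (rule le_gdistI) (auto simp: graph_connected)

lemma gdist_ge_2: "graph E \<Longrightarrow> u \<noteq> v \<Longrightarrow> \<not> E u v \<Longrightarrow> 2 \<le> gdist E u v"
  by (rule le_gdistI) (auto simp: graph_connected less_Suc_eq numeral_2_eq_2)

lemma gdist_ge_3: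
  "graph E \<Longrightarrow> u \<noteq> v \<Longrightarrow> \<not> E u v \<Longrightarrow> \<nexists>w. E u w \<and> E w v \<Longrightarrow> 3 \<le> gdist E u v"
  by (rule le_gdistI) (auto simp: graph_connected less_Suc_eq numeral_3_eq_3 relcompp_apply)

lemma gdist_edge: "graph E \<Longrightarrow> E u v \<Longrightarrow> gdist E u v = 1"
  using gdist_le[where n=1 and E=E and u=u and v=v] gdist_ge_1[of E u v] graph_irrefl[of E u] by force

lemma coupling_nonneg: "coupling m1 m2 A \<Longrightarrow> 0 \<le> A u v"
  by (simp add: coupling_def)

lemma coupling_supp2_finite: "coupling m1 m2 A \<Longrightarrow> finite (supp2 A)"
  by (simp add: coupling_def)

lemma coupling_row_finite:
  assumes "coupling m1 m2 A"
  shows "finite {v. A u v \<noteq> 0}"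
proof -
  have "{v. A u v \<noteq> 0} \<subseteq> snd ` supp2 A"
    by (auto simp: supp2_def intro!: image_eqI[where x="(u, _)"])
  then show ?thesis
    using coupling_supp2_finite[OF assms] finite_surj by blast
qed

lemma coupling_col_finite:
  assumes "coupling m1 m2 A"
  shows "finite {u. A u v \<noteq> 0}"
proof -
  have "{u. A u v \<noteq> 0} \<subseteq> fst ` supp2 A"
    by (auto simp: supp2_def intro!: image_eqI[where x="(_, v)"])
  then show ?thesis
    using coupling_supp2_finite[OF assms] finite_surj by blast
qed

lemma coupling_nonzero:
  assumes A: "coupling m1 m2 A" and "A u v \<noteq> 0"
  shows "m1 u \<noteq> 0 \<and> m2 v \<noteq> 0"
proof -
  have pos: "0 < A u v" using coupling_nonneg[OF A, of u v] assms(2) by linarith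
  have "A u v \<le> (\<Sum>w\<in>{w. A u w \<noteq> 0}. A u w)"
    using assms coupling_nonneg[OF A] coupling_row_finite[OF A] by (intro member_le_sum) auto
  moreover have "A u v \<le> (\<Sum>w\<in>{w. A w v \<noteq> 0}. A w v)"
    using assms coupling_nonneg[OF A] coupling_col_finite[OF A] by (intro member_le_sum) auto
  ultimately show ?thesis using A pos by (simp add: coupling_def)
qed

lemma sum_nonzero_eq:
  fixes F :: "'b \<Rightarrow> 'c::comm_monoid_add"
  assumes "finite D" "{v. F v \<noteq> 0} \<subseteq> D"
  shows "(\<Sum>v\<in>{v. F v \<noteq> 0}. F v) = (\<Sum>v\<in>D. F v)"
  by (rule sum.mono_neutral_left) (use assms in auto)

lemma coupling_sum_diff:
  fixes f :: "'a \<Rightarrow> real"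
  assumes A: "coupling m1 m2 A" and D: "finite D" "{u. m1 u \<noteq> 0} \<subseteq> D" "{v. m2 v \<noteq> 0} \<subseteq> D"
  shows "(\<Sum>p\<in>supp2 A. A (fst p) (snd p) * (f (fst p) - f (snd p)))
      = (\<Sum>u\<in>D. f u * m1 u) - (\<Sum>v\<in>D. f v * m2 v)"
proof -
  have AD: "A u v \<noteq> 0 \<Longrightarrow> u \<in> D \<and> v \<in> D" for u v
    using coupling_nonzero[OF A] D by blast
  have row: "m1 u = (\<Sum>v\<in>D. A u v)" for u
    using A sum_nonzero_eq[OF D(1), of "A u"] AD by (auto simp: coupling_def)
  have col: "m2 v = (\<Sum>u\<in>D. A u v)" for v
    using A sum_nonzero_eq[OF D(1), of "\<lambda>u. A u v"] AD by (auto simp: coupling_def)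
  have "(\<Sum>p\<in>supp2 A. A (fst p) (snd p) * (f (fst p) - f (snd p)))
      = (\<Sum>p\<in>D \<times> D. A (fst p) (snd p) * (f (fst p) - f (snd p)))"
    using AD D(1) by (intro sum.mono_neutral_left) (auto simp: supp2_def)
  also have "\<dots> = (\<Sum>u\<in>D. \<Sum>v\<in>D. A u v * f u) - (\<Sum>u\<in>D. \<Sum>v\<in>D. A u v * f v)"
    by (simp add: sum.cartesian_product case_prod_beta right_diff_distrib sum_subtractf)
  also have "(\<Sum>u\<in>D. \<Sum>v\<in>D. A u v * f u) = (\<Sum>u\<in>D. f u * m1 u)"
    by (simp add: row sum_distrib_left mult.commute)
  also have "(\<Sum>u\<in>D. \<Sum>v\<in>D. A u v * f v) = (\<Sum>v\<in>D. f v * m2 v)"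
    by (subst sum.swap) (simp add: col sum_distrib_left mult.commute)
  finally show ?thesis .
qed

lemma couplingI:
  fixes A :: "'a \<Rightarrow> 'a \<Rightarrow> real"
  assumes D: "finite D" and AD: "\<And>u v. A u v \<noteq> 0 \<Longrightarrow> u \<in> D \<and> v \<in> D"
    and bounds: "\<And>u v. 0 \<le> A u v" "\<And>u v. A u v \<le> 1"
    and row: "\<And>u. (\<Sum>v\<in>D. A u v) = m1 u"
    and col: "\<And>v. (\<Sum>u\<in>D. A u v) = m2 v"
  shows "coupling m1 m2 A"
  unfolding coupling_def
proof (intro conjI allI)
  have "supp2 A \<subseteq> D \<times> D"
    using AD by (auto simp: supp2_def)
  then show "finite (supp2 A)"
    using D finite_subset by blast
  show "(\<Sum>v\<in>{v. A u v \<noteq> 0}. A u v) = m1 u" for u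
    using sum_nonzero_eq[OF D, of "A u"] AD row by auto
  show "(\<Sum>u\<in>{u. A u v \<noteq> 0}. A u v) = m2 v" for v
    using sum_nonzero_eq[OF D, of "\<lambda>u. A u v"] AD col by auto
qed (use bounds in auto)

text \<open>Weak Kantorovich duality together with complementary slackness.\<close>
lemma transport_dist_eq_potential:
  fixes f :: "'a \<Rightarrow> real"
  assumes A: "coupling m1 m2 A"
    and D: "finite D" "{u. m1 u \<noteq> 0} \<subseteq> D" "{v. m2 v \<noteq> 0} \<subseteq> D"
    and lipschitz: "\<And>u v. m1 u \<noteq> 0 \<Longrightarrow> m2 v \<noteq> 0 \<Longrightarrow> f u - f v \<le> real (gdist E u v)"
    and tight: "\<And>u v. A u v \<noteq> 0 \<Longrightarrow> real (gdist E u v) \<le> f u - f v"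
  shows "transport_dist E m1 m2 = (\<Sum>u\<in>D. f u * m1 u) - (\<Sum>v\<in>D. f v * m2 v)"
    (is "_ = ?L")
proof -
  have cost: "transport_cost E B = (\<Sum>p\<in>supp2 B. B (fst p) (snd p) * real (gdist E (fst p) (snd p)))"
    for B by (simp add: transport_cost_def)
  have lower: "?L \<le> transport_cost E B" if B: "coupling m1 m2 B" for B
    unfolding cost coupling_sum_diff[OF B D, symmetric]
    using coupling_nonzero[OF B] coupling_nonneg[OF B] lipschitz
    by (intro sum_mono mult_left_mono) (auto simp: supp2_def)
  have "transport_cost E A \<le> ?L"
    unfolding cost coupling_sum_diff[OF A D, symmetric]
    using coupling_nonneg[OF A] tight by (intro sum_mono mult_left_mono) (auto simp: supp2_def)
  with lower[OF A] have "?L = transport_cost E A" by simp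
  then show ?thesis
    unfolding transport_dist_def using A lower by (intro cInf_eq_minimum) blast+
qed

definition pivot_coupling :: "'a \<Rightarrow> 'a \<Rightarrow> ('a \<Rightarrow> real) \<Rightarrow> ('a \<Rightarrow> real) \<Rightarrow> 'a \<Rightarrow> 'a \<Rightarrow> real" where
  "pivot_coupling x y m1 m2 u v =
     (if u = x \<and> v = y then m1 x + m2 y - 1 else if u = x then m2 v else if v = y then m1 u else 0)"

lemma pivot_coupling_nonzero:
  "pivot_coupling x y m1 m2 u v \<noteq> 0 \<Longrightarrow> u = x \<and> (v = y \<or> m2 v \<noteq> 0) \<or> v = y \<and> m1 u \<noteq> 0"
  by (auto simp: pivot_coupling_def split: if_splits)

lemma sum_pivot_coupling_row:
  assumes "finite D" "y \<in> D" "sum m2 D = 1"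
  shows "(\<Sum>v\<in>D. pivot_coupling x y m1 m2 u v) = m1 u"
proof (cases "u = x")
  case True
  then have "pivot_coupling x y m1 m2 u v = m2 v + (if v = y then m1 x - 1 else 0)" for v
    by (simp add: pivot_coupling_def)
  then show ?thesis using assms True by (simp add: sum.distrib)
next
  case False
  then have "pivot_coupling x y m1 m2 u v = (if v = y then m1 u else 0)" for v
    by (simp add: pivot_coupling_def)
  then show ?thesis using assms by simp
qed

lemma sum_pivot_coupling_col:
  assumes "finite D" "x \<in> D" "sum m1 D = 1"
  shows "(\<Sum>u\<in>D. pivot_coupling x y m1 m2 u v) = m2 v"
proof (cases "v = y")
  case True
  then have "pivot_coupling x y m1 m2 u v = m1 u + (if u = x then m2 y - 1 else 0)" for u
    by (simp add: pivot_coupling_def)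
  then show ?thesis using assms True by (simp add: sum.distrib)
next
  case False
  then have "pivot_coupling x y m1 m2 u v = (if u = x then m2 v else 0)" for u
    by (simp add: pivot_coupling_def)
  then show ?thesis using assms by simp
qed

lemma coupling_pivot_coupling:
  fixes m1 m2 :: "'a \<Rightarrow> real"
  assumes D: "finite D" "x \<in> D" "y \<in> D" "{u. m1 u \<noteq> 0} \<subseteq> D" "{v. m2 v \<noteq> 0} \<subseteq> D"
    and nonneg: "\<And>u. 0 \<le> m1 u" "\<And>v. 0 \<le> m2 v"
    and total: "sum m1 D = 1" "sum m2 D = 1"
    and excess: "1 \<le> m1 x + m2 y"
  shows "coupling m1 m2 (pivot_coupling x y m1 m2)"
proof (rule couplingI[OF D(1)])
  have le1: "m1 u \<le> 1" "m2 u \<le> 1" for u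
    using D nonneg total member_le_sum[of u D m1] member_le_sum[of u D m2]
    by (cases "u \<in> D"; force)+
  show "pivot_coupling x y m1 m2 u v \<noteq> 0 \<Longrightarrow> u \<in> D \<and> v \<in> D" for u v
    using pivot_coupling_nonzero[of x y m1 m2 u v] D by blast
  show "0 \<le> pivot_coupling x y m1 m2 u v" "pivot_coupling x y m1 m2 u v \<le> 1" for u v
    using nonneg[of u] nonneg[of v] le1[of u] le1[of v] le1[of x] le1[of y] excess
    unfolding pivot_coupling_def by auto
qed (use D total in \<open>simp_all add: sum_pivot_coupling_row sum_pivot_coupling_col\<close>)

lemma mu_nonzero: "mu E \<alpha> x u \<noteq> 0 \<Longrightarrow> u = x \<or> E x u"
  by (auto simp: mu_def split: if_splits)

lemma mu_nonneg: "0 \<le> \<alpha> \<Longrightarrow> \<alpha> \<le> 1 \<Longrightarrow> 0 \<le> mu E \<alpha> x u"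
  by (simp add: mu_def)

lemma sum_mu:
  fixes g :: "'a \<Rightarrow> real"
  assumes G: "graph E" and D: "finite D" "x \<in> D" "{v. E x v} \<subseteq> D"
  shows "(\<Sum>u\<in>D. g u * mu E \<alpha> x u) = \<alpha> * g x + (1 - \<alpha>) / deg E x * sum g {v. E x v}"
proof -
  have "g u * mu E \<alpha> x u = (if u = x then \<alpha> * g x else 0) + (if E x u then (1 - \<alpha>) / deg E x * g u else 0)" for u
    using graph_irrefl[OF G, of x] by (auto simp: mu_def)
  moreover have "{u \<in> D. E x u} = {v. E x v}" using D by auto
  ultimately show ?thesis
    using D by (simp add: sum.distrib sum.inter_filter[symmetric] sum_distrib_left)
qed

lemma sum_mu_eq_1:
  assumes G: "graph E" and D: "finite D" "x \<in> D" "{v. E x v} \<subseteq> D" and "0 < deg E x"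
  shows "sum (mu E \<alpha> x) D = 1"
  using sum_mu[OF G D, of "\<lambda>_. 1" \<alpha>] assms by (simp add: deg_def)

lemma ricci_eqI:
  assumes "eventually (\<lambda>\<alpha>. kappa_alpha E \<alpha> x y / (1 - \<alpha>) = c) (at_left 1)"
  shows "ricci E x y = c"
  unfolding ricci_def using assms by (intro tendsto_Lim tendsto_eventually) simp_all

lemma unit_fractions_sum_eq_1:
  fixes m n :: nat
  assumes "0 < m" "0 < n" "1 / real m + 1 / real n = 1"
  shows "m = 2 \<and> n = 2"
proof -
  have "real (m * n) = real (m + n)"
    using assms by (simp add: field_simps)
  then have "m * n = m + n"
    using of_nat_eq_iff by blast
  moreover obtain a b where "m = Suc a" "n = Suc b"
    using assms(1,2) by (metis gr0_implies_Suc)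
  ultimately show ?thesis
    by simp
qed

locale edge_without_short_cycles =
  fixes E :: "'a \<Rightarrow> 'a \<Rightarrow> bool" and x y :: 'a
  assumes graph: "graph E" and edge: "E x y"
    and no_C3: "\<not> edge_in_cycle E x y 3"
    and no_C4: "\<not> edge_in_cycle E x y 4"
    and no_C5: "\<not> edge_in_cycle E x y 5"
begin

lemma adj_sym: "E u v \<Longrightarrow> E v u"
  using graph_sym[OF graph] .

lemma adj_irrefl: "\<not> E u u"
  using graph_irrefl[OF graph] .

lemma neq: "x \<noteq> y"
  using edge adj_irrefl by auto

lemma no_triangle: "E x w \<Longrightarrow> \<not> E w y"
proof
  assume "E x w" "E w y"
  then have "edge_in_cycle E x y (length [x, w, y])"
    using edge neq adj_irrefl by (intro edge_in_cycleI) auto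
  with no_C3 show False by (simp add: eval_nat_numeral)
qed

lemma no_square: "E x a \<Longrightarrow> a \<noteq> y \<Longrightarrow> E b y \<Longrightarrow> b \<noteq> x \<Longrightarrow> \<not> E a b"
proof
  assume "E x a" "a \<noteq> y" "E b y" "b \<noteq> x" "E a b"
  then have "edge_in_cycle E x y (length [x, a, b, y])"
    using edge neq adj_irrefl by (intro edge_in_cycleI) auto
  with no_C4 show False by (simp add: eval_nat_numeral)
qed

lemma no_pentagon: "E x a \<Longrightarrow> a \<noteq> y \<Longrightarrow> E b y \<Longrightarrow> b \<noteq> x \<Longrightarrow> \<not> (E a c \<and> E c b)"
proof
  assume "E x a" "a \<noteq> y" "E b y" "b \<noteq> x" "E a c \<and> E c b"
  moreover have "c \<noteq> x" "c \<noteq> y" "a \<noteq> b"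
    using calculation no_triangle by blast+
  ultimately have "edge_in_cycle E x y (length [x, a, c, b, y])"
    using edge neq adj_irrefl by (intro edge_in_cycleI) auto
  with no_C5 show False by (simp add: eval_nat_numeral)
qed

definition potential :: "'a \<Rightarrow> real" where
  "potential u = (if u = x then 1 else if u = y then 0 else if E x u then 2 else if E y u then -1 else 0)"

lemma potential_x: "potential x = 1"
  by (simp add: potential_def)

lemma potential_y: "potential y = 0"
  using neq by (simp add: potential_def)

lemma potential_nbr_x: "E x a \<Longrightarrow> a \<noteq> y \<Longrightarrow> potential a = 2"
  using adj_irrefl by (auto simp: potential_def)

lemma potential_nbr_y: "E y b \<Longrightarrow> b \<noteq> x \<Longrightarrow> potential b = -1"
  using adj_irrefl no_triangle adj_sym by (auto simp: potential_def)

lemma gdist_x_nbr_y: "E y b \<Longrightarrow> b \<noteq> x \<Longrightarrow> 2 \<le> gdist E x b"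
  using no_triangle adj_sym by (intro gdist_ge_2[OF graph]) auto

lemma gdist_nbr_x_y: "E x a \<Longrightarrow> a \<noteq> y \<Longrightarrow> 2 \<le> gdist E a y"
  using no_triangle by (intro gdist_ge_2[OF graph]) auto

lemma gdist_nbr_x_nbr_y: "E x a \<Longrightarrow> a \<noteq> y \<Longrightarrow> E y b \<Longrightarrow> b \<noteq> x \<Longrightarrow> 3 \<le> gdist E a b"
  using no_triangle no_square no_pentagon adj_sym by (intro gdist_ge_3[OF graph]) blast+

lemma potential_lipschitz:
  assumes u: "u = x \<or> E x u" and v: "v = y \<or> E y v"
  shows "potential u - potential v \<le> real (gdist E u v)"
proof (cases "u = v")
  case False
  then have "1 \<le> gdist E u v"
    by (rule gdist_ge_1[OF graph])
  then show ?thesis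
    using u v neq gdist_x_nbr_y gdist_nbr_x_y gdist_nbr_x_nbr_y
    by (cases "u = y"; cases "v = x")
      (auto simp: potential_x potential_y potential_nbr_x potential_nbr_y)
qed simp

lemma gdist_le_potential_from_x: "v = y \<or> E y v \<Longrightarrow> real (gdist E x v) \<le> potential x - potential v"
  using gdist_edge[OF graph edge] gdist_self[of E x] gdist_le_2[of E x y v] edge
  by (cases "v = x") (auto simp: potential_x potential_y potential_nbr_y)

lemma gdist_le_potential_to_y: "u = x \<or> E x u \<Longrightarrow> real (gdist E u y) \<le> potential u - potential y"
  using gdist_edge[OF graph edge] gdist_self[of E y] gdist_le_2[of E u x y] adj_sym edge
  by (cases "u = y") (auto simp: potential_x potential_y potential_nbr_x)

lemma deg_x: "0 < deg E x" and deg_y: "0 < deg E y"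
  using deg_pos[OF graph] edge adj_sym by blast+

lemma sum_potential_nbrs_x: "sum potential {v. E x v} = 2 * (real (deg E x) - 1)"
proof -
  have fin: "finite {v. E x v}"
    using graph_finite_neighbours[OF graph] .
  have "sum potential {v. E x v} = potential y + sum potential ({v. E x v} - {y})"
    using fin edge by (simp add: sum.remove)
  also have "sum potential ({v. E x v} - {y}) = sum (\<lambda>_. 2) ({v. E x v} - {y})"
    by (rule sum.cong) (auto simp: potential_nbr_x)
  finally show ?thesis
    using fin edge deg_x by (simp add: potential_y deg_def of_nat_diff)
qed

lemma sum_potential_nbrs_y: "sum potential {v. E y v} = 2 - real (deg E y)"
proof -
  have fin: "finite {v. E y v}"
    using graph_finite_neighbours[OF graph] .
  have "sum potential {v. E y v} = potential x + sum potential ({v. E y v} - {x})"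
    using fin edge adj_sym by (simp add: sum.remove)
  also have "sum potential ({v. E y v} - {x}) = sum (\<lambda>_. -1) ({v. E y v} - {x})"
    by (rule sum.cong) (auto simp: potential_nbr_y)
  finally show ?thesis
    using fin edge adj_sym deg_y by (simp add: potential_x deg_def of_nat_diff)
qed

lemma transport_dist_mu:
  assumes "1 / 2 \<le> \<alpha>" "\<alpha> \<le> 1"
  shows "transport_dist E (mu E \<alpha> x) (mu E \<alpha> y) = 1 + (1 - \<alpha>) * (2 - 2 / deg E x - 2 / deg E y)"
proof -
  define D where "D = {v. E x v} \<union> {v. E y v}"
  have D: "finite D" "x \<in> D" "y \<in> D" "{v. E x v} \<subseteq> D" "{v. E y v} \<subseteq> D"
    using graph_finite_neighbours[OF graph] edge adj_sym by (auto simp: D_def)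
  have supp: "{u. mu E \<alpha> x u \<noteq> 0} \<subseteq> D" "{v. mu E \<alpha> y v \<noteq> 0} \<subseteq> D"
    using D by (auto dest!: mu_nonzero)
  have "transport_dist E (mu E \<alpha> x) (mu E \<alpha> y)
      = (\<Sum>u\<in>D. potential u * mu E \<alpha> x u) - (\<Sum>v\<in>D. potential v * mu E \<alpha> y v)"
  proof (rule transport_dist_eq_potential[OF _ D(1) supp])
    show "coupling (mu E \<alpha> x) (mu E \<alpha> y) (pivot_coupling x y (mu E \<alpha> x) (mu E \<alpha> y))"
    proof (rule coupling_pivot_coupling[OF D(1-3) supp])
      show "0 \<le> mu E \<alpha> x u" "0 \<le> mu E \<alpha> y u" for u
        using assms by (simp_all add: mu_nonneg)
      show "sum (mu E \<alpha> x) D = 1"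
        using sum_mu_eq_1[OF graph D(1,2,4) deg_x] .
      show "sum (mu E \<alpha> y) D = 1"
        using sum_mu_eq_1[OF graph D(1,3,5) deg_y] .
      show "1 \<le> mu E \<alpha> x x + mu E \<alpha> y y"
        using assms by (simp add: mu_def)
    qed
    show "potential u - potential v \<le> real (gdist E u v)" if "mu E \<alpha> x u \<noteq> 0" "mu E \<alpha> y v \<noteq> 0" for u v
      using potential_lipschitz[OF mu_nonzero[OF that(1)] mu_nonzero[OF that(2)]] .
    show "real (gdist E u v) \<le> potential u - potential v"
      if "pivot_coupling x y (mu E \<alpha> x) (mu E \<alpha> y) u v \<noteq> 0" for u v
      using pivot_coupling_nonzero[OF that] gdist_le_potential_from_x gdist_le_potential_to_y
      by (auto dest!: mu_nonzero)
  qed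
  also have "\<dots> = (\<alpha> * potential x + (1 - \<alpha>) / deg E x * sum potential {v. E x v})
      - (\<alpha> * potential y + (1 - \<alpha>) / deg E y * sum potential {v. E y v})"
    by (simp only: sum_mu[OF graph D(1,2,4)] sum_mu[OF graph D(1,3,5)])
  also have "\<dots> = 1 + (1 - \<alpha>) * (2 - 2 / deg E x - 2 / deg E y)"
    using deg_x deg_y by (simp add: potential_x potential_y sum_potential_nbrs_x sum_potential_nbrs_y field_simps)
  finally show ?thesis .
qed

lemma ricci_edge: "ricci E x y = 2 / deg E x + 2 / deg E y - 2"
proof (rule ricci_eqI)
  have "eventually (\<lambda>\<alpha>. \<alpha> \<in> {1/2<..<1::real}) (at_left 1)"
    by (rule eventually_at_left_real) simp
  then show "eventually (\<lambda>\<alpha>. kappa_alpha E \<alpha> x y / (1 - \<alpha>) = 2 / deg E x + 2 / deg E y - 2) (at_left 1)"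
    by (rule eventually_mono)
      (simp add: kappa_alpha_def transport_dist_mu gdist_edge[OF graph edge] field_simps)
qed

end

theorem lemma5:
  fixes E :: "'a \<Rightarrow> 'a \<Rightarrow> bool"
  assumes "graph E"
    and "ricci_flat E"
    and "\<not> (\<exists>u v. E u v \<and> deg E u = 2 \<and> deg E v = 2)"
  shows "\<forall>u v. E u v \<longrightarrow>
           edge_in_cycle E u v 3 \<or> edge_in_cycle E u v 4 \<or> edge_in_cycle E u v 5"
proof (intro allI impI)
  fix u v
  assume uv: "E u v"
  show "edge_in_cycle E u v 3 \<or> edge_in_cycle E u v 4 \<or> edge_in_cycle E u v 5"
  proof (rule ccontr)
    assume "\<not> ?thesis"
    then interpret edge_without_short_cycles E u v
      using assms(1) uv by unfold_locales auto
    have "2 / deg E u + 2 / deg E v - 2 = 0"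
      using ricci_edge assms(2) uv by (simp add: ricci_flat_def)
    then have "deg E u = 2 \<and> deg E v = 2"
      using deg_x deg_y by (intro unit_fractions_sum_eq_1) simp_all
    with assms(3) uv show False by blast
  qed
qed

end
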